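(* Let $B$ be a norming region and $x\in S$, and define measures $\nu,\mu$ on $S$ by $\nu(y)=g(x,y)$ and $\mu(y)=h(x)\,E^x_h\big[\sum_{n\ge0}\mathbf 1_{\{y\}}(X_n)\big]$. Then for all $y\in S$, $$\nu(y)=\mathbf 1_{B^c}(y)\frac{\mu(y)}{h(y)}+\sum_{z\in B}\mu(z)\,g(z,y).$$
   Context: $S$ countable, $p=(p_{x,y})$ stochastic on $S$, $(d_x)_{x\in S}$ probability distributions on $\mathbb N_0$, $m_x=\sum_mm\,d_x(m)$, $q_{x,y}=m_xp_{x,y}$, $Q=(q_{x,y})$, Green's function $g(x,y)=\sum_{n\ge0}(Q^n)_{x,y}$, assumed finite. For the branching Markov chain (each individual at $z$ independently has a $d_z$-distributed number of children at independent $p(z,\cdot)$-locations), $\mathcal H_B$ is the set of individuals located in $B$ with no strict ancestor in $B$; $\mathbb E^x$ refers to starting with one individual at $x$. A norming region is a finite $B\subset S$ with $\sum_{y\in B}g(x,y)>0$ for all $x$; $h(x)=\mathbb E^x[\#\mathcal H_B]$. $P_h^x$ (expectation $E_h^x$) is the Markov chain started at $x$ with substochastic transition matrix $p^h_{x,y}=\mathbf 1_{B^c}(x)q_{x,y}h(y)/h(x)$, absorbed in a cemetery state $\partial\notin S$ with the missing mass. *)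

theory Defs
  imports "HOL-Probability.Probability"
begin

text \<open>State space S is the countable type 'a. The stochastic matrix p is given
  row-wise as probability mass functions p x, the offspring laws as pmfs d x on nat.\<close>

definition mean_offspring :: "('a \<Rightarrow> nat pmf) \<Rightarrow> 'a \<Rightarrow> ennreal" where
  "mean_offspring d x = (\<integral>\<^sup>+ n. ennreal (real n) \<partial>measure_pmf (d x))"

definition qmat :: "('a \<Rightarrow> nat pmf) \<Rightarrow> ('a \<Rightarrow> 'a pmf) \<Rightarrow> 'a \<Rightarrow> 'a \<Rightarrow> ennreal" where
  "qmat d p x y = mean_offspring d x * ennreal (pmf (p x) y)"

fun Qpow :: "('a \<Rightarrow> nat pmf) \<Rightarrow> ('a \<Rightarrow> 'a pmf) \<Rightarrow> nat \<Rightarrow> 'a \<Rightarrow> 'a \<Rightarrow> ennreal" where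
  "Qpow d p 0 x y = (if x = y then 1 else 0)"
| "Qpow d p (Suc n) x y = (\<integral>\<^sup>+ z. qmat d p x z * Qpow d p n z y \<partial>count_space UNIV)"

definition green :: "('a \<Rightarrow> nat pmf) \<Rightarrow> ('a \<Rightarrow> 'a pmf) \<Rightarrow> 'a \<Rightarrow> 'a \<Rightarrow> ennreal" where
  "green d p x y = (\<Sum>n. Qpow d p n x y)"

definition norming_region :: "('a \<Rightarrow> nat pmf) \<Rightarrow> ('a \<Rightarrow> 'a pmf) \<Rightarrow> 'a set \<Rightarrow> bool" where
  "norming_region d p B \<longleftrightarrow> finite B \<and> (\<forall>x. (\<Sum>y\<in>B. green d p x y) > 0)"

text \<open>Individuals are Ulam-Harris labels,
  written as lists with the most recent generation first: the i-th child of u is i # u,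
  the strict ancestors of u are drop k u for 1 <= k <= length u.
  For every label u, every state z and a flag b there is an independent sample
  omega (u, z, b) with law d z (x) p z. The number of children of u is the first
  component of omega (u, pos u, True); the position of child i # u is the second component
  of omega (i # u, pos u, False). Hence, given the positions, numbers of children and
  children's positions are independent with the prescribed laws.\<close>

definition bmc_space :: "('a \<Rightarrow> nat pmf) \<Rightarrow> ('a \<Rightarrow> 'a pmf)
    \<Rightarrow> ((nat list \<times> 'a \<times> bool) \<Rightarrow> nat \<times> 'a) measure" where
  "bmc_space d p = (\<Pi>\<^sub>M i\<in>UNIV. measure_pmf (pair_pmf (d (fst (snd i))) (p (fst (snd i)))))"

fun bmc_pos :: "'a \<Rightarrow> ((nat list \<times> 'a \<times> bool) \<Rightarrow> nat \<times> 'a) \<Rightarrow> nat list \<Rightarrow> 'a" where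
  "bmc_pos x \<omega> [] = x"
| "bmc_pos x \<omega> (i # u) = snd (\<omega> (i # u, bmc_pos x \<omega> u, False))"

definition bmc_nchildren :: "'a \<Rightarrow> ((nat list \<times> 'a \<times> bool) \<Rightarrow> nat \<times> 'a) \<Rightarrow> nat list \<Rightarrow> nat" where
  "bmc_nchildren x \<omega> u = fst (\<omega> (u, bmc_pos x \<omega> u, True))"

fun bmc_alive :: "'a \<Rightarrow> ((nat list \<times> 'a \<times> bool) \<Rightarrow> nat \<times> 'a) \<Rightarrow> nat list \<Rightarrow> bool" where
  "bmc_alive x \<omega> [] = True"
| "bmc_alive x \<omega> (i # u) = (bmc_alive x \<omega> u \<and> i < bmc_nchildren x \<omega> u)"

definition HB :: "'a set \<Rightarrow> 'a \<Rightarrow> ((nat list \<times> 'a \<times> bool) \<Rightarrow> nat \<times> 'a) \<Rightarrow> nat list set" where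
  "HB B x \<omega> = {u. bmc_alive x \<omega> u \<and> bmc_pos x \<omega> u \<in> B
                 \<and> (\<forall>k\<in>{1..length u}. bmc_pos x \<omega> (drop k u) \<notin> B)}"

definition hfunE :: "('a \<Rightarrow> nat pmf) \<Rightarrow> ('a \<Rightarrow> 'a pmf) \<Rightarrow> 'a set \<Rightarrow> 'a \<Rightarrow> ennreal" where
  "hfunE d p B x = (\<integral>\<^sup>+ \<omega>. emeasure (count_space UNIV) (HB B x \<omega>) \<partial>bmc_space d p)"

definition hfun :: "('a \<Rightarrow> nat pmf) \<Rightarrow> ('a \<Rightarrow> 'a pmf) \<Rightarrow> 'a set \<Rightarrow> 'a \<Rightarrow> real" where
  "hfun d p B x = enn2real (hfunE d p B x)"

definition ph_weight :: "('a \<Rightarrow> nat pmf) \<Rightarrow> ('a \<Rightarrow> 'a pmf) \<Rightarrow> 'a set \<Rightarrow> 'a \<Rightarrow> 'a \<Rightarrow> real" where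
  "ph_weight d p B z y = indicator (-B) z * enn2real (qmat d p z y) * hfun d p B y / hfun d p B z"

text \<open>Transition law from state o: from the cemetery None stay in None; from Some z go to
  Some y with probability p^h(z,y) and to None with the missing mass.\<close>
definition ph_kernel :: "('a \<Rightarrow> nat pmf) \<Rightarrow> ('a \<Rightarrow> 'a pmf) \<Rightarrow> 'a set \<Rightarrow> 'a option \<Rightarrow> 'a option pmf" where
  "ph_kernel d p B s = embed_pmf (\<lambda>t. case s of
       None \<Rightarrow> (if t = None then 1 else 0)
     | Some z \<Rightarrow> (case t of
           Some y \<Rightarrow> ph_weight d p B z y
         | None \<Rightarrow> 1 - enn2real (\<integral>\<^sup>+ y. ennreal (ph_weight d p B z y) \<partial>count_space UNIV)))"

text \<open>The chain: omega (n, s) is an independent sample of ph_kernel s for every time n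
  and state s; X_0 = Some x, X_{n+1} = omega (n, X_n).\<close>
definition hchain_space :: "('a \<Rightarrow> nat pmf) \<Rightarrow> ('a \<Rightarrow> 'a pmf) \<Rightarrow> 'a set
    \<Rightarrow> ((nat \<times> 'a option) \<Rightarrow> 'a option) measure" where
  "hchain_space d p B = (\<Pi>\<^sub>M i\<in>UNIV. measure_pmf (ph_kernel d p B (snd i)))"

fun hchain :: "'a \<Rightarrow> ((nat \<times> 'a option) \<Rightarrow> 'a option) \<Rightarrow> nat \<Rightarrow> 'a option" where
  "hchain x \<omega> 0 = Some x"
| "hchain x \<omega> (Suc n) = \<omega> (n, hchain x \<omega> n)"

definition hvisits :: "('a \<Rightarrow> nat pmf) \<Rightarrow> ('a \<Rightarrow> 'a pmf) \<Rightarrow> 'a set \<Rightarrow> 'a \<Rightarrow> 'a \<Rightarrow> ennreal" where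
  "hvisits d p B x y = (\<integral>\<^sup>+ \<omega>. (\<Sum>n. indicator {Some y} (hchain x \<omega> n)) \<partial>hchain_space d p B)"

definition mu_meas :: "('a \<Rightarrow> nat pmf) \<Rightarrow> ('a \<Rightarrow> 'a pmf) \<Rightarrow> 'a set \<Rightarrow> 'a \<Rightarrow> 'a \<Rightarrow> real" where
  "mu_meas d p B x y = hfun d p B x * enn2real (hvisits d p B x y)"

end

theory Submission
  imports Defs
begin

text \<open>Split the paths counted by the Green function g at their first visit to B. With the
  taboo kernel Q_B(z,y) = 1_{B^c}(z) q(z,y) and its Green function G_B this gives
  g(x,y) = G_B(x,y) 1_{B^c}(y) + sum_{z in B} G_B(x,z) g(z,y).
  In the branching chain, the expected number of individuals of generation n located at z
  none of whose strict ancestors lies in B is Q_B^n(x,z), so h(x) = sum_{z in B} G_B(x,z).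
  Consequently h = 1 on B and h is Q-harmonic off B, so p^h is substochastic, and
  (p^h)^n(x,y) h(x) = Q_B^n(x,y) h(y). Summing over n gives mu(y) = G_B(x,y) h(y), and
  substituting this into the first-entrance decomposition of g proves the claim.\<close>


section \<open>Kernel powers and the first-entrance decomposition\<close>

lemma nn_integral_count_space_delta_left:
  "(\<integral>\<^sup>+z. (if x = z then 1 else 0) * f z \<partial>count_space UNIV) = (f x :: ennreal)"
  by (subst nn_integral_cong[where v="\<lambda>z. f z * indicator {x} z"])
    (auto split: split_indicator)

lemma nn_integral_count_space_delta_right:
  "(\<integral>\<^sup>+z. f z * (if z = y then 1 else 0) \<partial>count_space UNIV) = (f y :: ennreal)"
  by (subst nn_integral_cong[where v="\<lambda>z. f z * indicator {y} z"])
    (auto split: split_indicator)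

lemma ennreal_suminf_diagonal:
  fixes f :: "nat \<Rightarrow> nat \<Rightarrow> ennreal"
  shows "(\<Sum>n. \<Sum>k\<le>n. f k (n - k)) = (\<Sum>k. \<Sum>j. f k j)"
proof -
  have shift: "(\<integral>\<^sup>+n. f k (n - k) * indicator {k..} n \<partial>count_space UNIV) = (\<Sum>j. f k j)" for k
  proof -
    have "bij_betw (\<lambda>j. j + k) UNIV {k..}"
      by (rule bij_betwI[where g="\<lambda>n. n - k"]) auto
    from nn_integral_bij_count_space[OF this, of "\<lambda>n. f k (n - k)"]
    show ?thesis
      by (simp add: nn_integral_count_space_indicator nn_integral_count_space_nat)
  qed
  have "(\<Sum>n. \<Sum>k\<le>n. f k (n - k))
      = (\<integral>\<^sup>+n. \<integral>\<^sup>+k. f k (n - k) * indicator {k..} n \<partial>count_space UNIV \<partial>count_space UNIV)"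
  proof -
    have "(\<Sum>k\<le>n. f k (n - k)) = (\<integral>\<^sup>+k. f k (n - k) * indicator {k..} n \<partial>count_space UNIV)" for n
      by (subst nn_integral_cong[where v="\<lambda>k. f k (n - k) * indicator {..n} k"])
        (auto simp: nn_integral_count_space_indicator[symmetric] nn_integral_count_space_finite
          split: split_indicator)
    then show ?thesis by (simp add: nn_integral_count_space_nat)
  qed
  also have "\<dots> = (\<integral>\<^sup>+k. \<integral>\<^sup>+n. f k (n - k) * indicator {k..} n \<partial>count_space UNIV \<partial>count_space UNIV)"
    by (rule nn_integral_count_space_nn_integral) auto
  also have "\<dots> = (\<Sum>k. \<Sum>j. f k j)"
    by (simp add: shift nn_integral_count_space_nat)
  finally show ?thesis .
qed

fun kernel_pow :: "('s \<Rightarrow> 's \<Rightarrow> ennreal) \<Rightarrow> nat \<Rightarrow> 's \<Rightarrow> 's \<Rightarrow> ennreal" where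
  "kernel_pow Q 0 x y = (if x = y then 1 else 0)"
| "kernel_pow Q (Suc n) x y = (\<integral>\<^sup>+z. kernel_pow Q n x z * Q z y \<partial>count_space UNIV)"

definition kernel_green :: "('s \<Rightarrow> 's \<Rightarrow> ennreal) \<Rightarrow> 's \<Rightarrow> 's \<Rightarrow> ennreal" where
  "kernel_green Q x y = (\<Sum>n. kernel_pow Q n x y)"

definition taboo :: "'s set \<Rightarrow> ('s \<Rightarrow> 's \<Rightarrow> ennreal) \<Rightarrow> 's \<Rightarrow> 's \<Rightarrow> ennreal" where
  "taboo B Q z y = indicator (-B) z * Q z y"

lemma kernel_pow_Suc_left:
  fixes Q :: "'s::countable \<Rightarrow> 's \<Rightarrow> ennreal"
  shows "kernel_pow Q (Suc n) x y = (\<integral>\<^sup>+z. Q x z * kernel_pow Q n z y \<partial>count_space UNIV)"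
proof (induction n arbitrary: y)
  case 0
  show ?case
    by (simp only: kernel_pow.simps nn_integral_count_space_delta_left
        nn_integral_count_space_delta_right)
next
  case (Suc n)
  have "kernel_pow Q (Suc (Suc n)) x y
      = (\<integral>\<^sup>+w. \<integral>\<^sup>+z. Q x z * kernel_pow Q n z w * Q w y \<partial>count_space UNIV \<partial>count_space UNIV)"
    by (simp only: kernel_pow.simps(2)[of Q "Suc n"] Suc.IH)
      (intro nn_integral_cong nn_integral_multc[symmetric], simp)
  also have "\<dots> = (\<integral>\<^sup>+z. \<integral>\<^sup>+w. Q x z * (kernel_pow Q n z w * Q w y)
      \<partial>count_space UNIV \<partial>count_space UNIV)"
    by (subst nn_integral_count_space_nn_integral) (auto simp: mult.assoc)
  also have "\<dots> = (\<integral>\<^sup>+z. Q x z * kernel_pow Q (Suc n) z y \<partial>count_space UNIV)"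
    by (simp add: nn_integral_cmult)
  finally show ?case .
qed

lemma kernel_pow_one:
  fixes Q :: "'s::countable \<Rightarrow> 's \<Rightarrow> ennreal"
  shows "kernel_pow Q 1 x y = Q x y"
  by (simp only: One_nat_def kernel_pow.simps nn_integral_count_space_delta_left)

lemma kernel_pow_le_kernel_green: "kernel_pow Q n x y \<le> kernel_green Q x y"
  unfolding kernel_green_def using sum_le_suminf[of "\<lambda>n. kernel_pow Q n x y" "{n}"] by simp

lemma kernel_pow_mono:
  assumes "\<And>z y. Q z y \<le> Q' z y"
  shows "kernel_pow Q n x y \<le> kernel_pow Q' n x y"
  by (induction n arbitrary: y) (auto intro!: nn_integral_mono mult_mono assms)

lemma kernel_green_mono:
  assumes "\<And>z y. Q z y \<le> Q' z y"
  shows "kernel_green Q x y \<le> kernel_green Q' x y"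
  unfolding kernel_green_def by (intro suminf_le kernel_pow_mono assms) auto

lemma taboo_le: "taboo B Q z y \<le> Q z y"
  by (simp add: taboo_def indicator_def)

lemma Qpow_eq_kernel_pow:
  fixes d :: "'a::countable \<Rightarrow> nat pmf"
  shows "Qpow d p n x y = kernel_pow (qmat d p) n x y"
  by (induction n arbitrary: x) (simp_all add: kernel_pow_Suc_left del: kernel_pow.simps(2))

lemma green_eq_kernel_green:
  fixes d :: "'a::countable \<Rightarrow> nat pmf"
  shows "green d p = kernel_green (qmat d p)"
  by (simp add: fun_eq_iff green_def kernel_green_def Qpow_eq_kernel_pow)

lemma kernel_pow_taboo_Suc_in:
  fixes Q :: "'s::countable \<Rightarrow> 's \<Rightarrow> ennreal"
  assumes "z \<in> B"
  shows "kernel_pow (taboo B Q) (Suc n) z y = 0"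
  using assms by (simp add: kernel_pow_Suc_left taboo_def del: kernel_pow.simps(2))

lemma kernel_pow_taboo_Suc_out:
  fixes Q :: "'s::countable \<Rightarrow> 's \<Rightarrow> ennreal"
  assumes "x \<notin> B"
  shows "kernel_pow (taboo B Q) (Suc n) x y
       = (\<integral>\<^sup>+w. Q x w * kernel_pow (taboo B Q) n w y \<partial>count_space UNIV)"
  using assms by (simp add: kernel_pow_Suc_left taboo_def del: kernel_pow.simps(2))

lemma kernel_green_shift:
  "kernel_green Q x y = (if x = y then 1 else 0) + (\<Sum>n. kernel_pow Q (Suc n) x y)"
  unfolding kernel_green_def using suminf_offset[of "\<lambda>n. kernel_pow Q n x y" 1]
  by (simp add: add.commute del: kernel_pow.simps(2))

lemma kernel_green_taboo_in:
  fixes Q :: "'s::countable \<Rightarrow> 's \<Rightarrow> ennreal"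
  assumes "z \<in> B"
  shows "kernel_green (taboo B Q) z y = (if z = y then 1 else 0)"
  using assms by (simp add: kernel_green_shift kernel_pow_taboo_Suc_in del: kernel_pow.simps(2))

lemma kernel_green_taboo_harmonic:
  fixes Q :: "'s::countable \<Rightarrow> 's \<Rightarrow> ennreal"
  assumes "z \<notin> B" "w \<in> B"
  shows "(\<integral>\<^sup>+y. Q z y * kernel_green (taboo B Q) y w \<partial>count_space UNIV)
       = kernel_green (taboo B Q) z w"
proof -
  have "(\<integral>\<^sup>+y. Q z y * kernel_green (taboo B Q) y w \<partial>count_space UNIV)
      = (\<integral>\<^sup>+y. (\<Sum>n. taboo B Q z y * kernel_pow (taboo B Q) n y w) \<partial>count_space UNIV)"
    using assms(1) by (simp add: kernel_green_def taboo_def ennreal_suminf_cmult)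
  also have "\<dots> = (\<Sum>n. \<integral>\<^sup>+y. taboo B Q z y * kernel_pow (taboo B Q) n y w \<partial>count_space UNIV)"
    by (rule nn_integral_suminf) simp
  also have "\<dots> = (\<Sum>n. kernel_pow (taboo B Q) (Suc n) z w)"
    by (simp only: kernel_pow_Suc_left)
  also have "\<dots> = kernel_green (taboo B Q) z w"
    using assms by (subst kernel_green_shift) auto
  finally show ?thesis .
qed

lemma kernel_pow_first_entrance:
  fixes Q :: "'s::countable \<Rightarrow> 's \<Rightarrow> ennreal"
  assumes "finite B"
  shows "kernel_pow Q n x y = kernel_pow (taboo B Q) n x y * indicator (-B) y
           + (\<Sum>k\<le>n. \<Sum>z\<in>B. kernel_pow (taboo B Q) k x z * kernel_pow Q (n - k) z y)"
proof (induction n arbitrary: x)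
  case 0
  show ?case
    using assms by (cases "y \<in> B") (auto simp: if_distrib[where f="\<lambda>a. a * _"] cong: if_cong)
next
  case (Suc n)
  let ?T = "kernel_pow (taboo B Q)"
  have head: "(\<Sum>k\<le>Suc n. \<Sum>z\<in>B. ?T k x z * kernel_pow Q (Suc n - k) z y)
      = (\<Sum>z\<in>B. ?T 0 x z * kernel_pow Q (Suc n) z y)
        + (\<Sum>k\<le>n. \<Sum>z\<in>B. ?T (Suc k) x z * kernel_pow Q (n - k) z y)"
    by (subst sum.atMost_Suc_shift) simp
  show ?case
  proof (cases "x \<in> B")
    case True
    then show ?thesis
      unfolding head using assms
      by (simp add: kernel_pow_taboo_Suc_in if_distrib[where f="\<lambda>a. a * _"]
          cong: if_cong del: kernel_pow.simps(2))
  next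
    case False
    have no_entry: "(\<Sum>z\<in>B. ?T 0 x z * kernel_pow Q (Suc n) z y) = 0"
      using False by (intro sum.neutral) auto
    have "kernel_pow Q (Suc n) x y
        = (\<integral>\<^sup>+w. Q x w * (?T n w y * indicator (-B) y
            + (\<Sum>k\<le>n. \<Sum>z\<in>B. ?T k w z * kernel_pow Q (n - k) z y)) \<partial>count_space UNIV)"
      by (simp only: kernel_pow_Suc_left Suc.IH)
    also have "\<dots> = (\<integral>\<^sup>+w. Q x w * ?T n w y \<partial>count_space UNIV) * indicator (-B) y
        + (\<Sum>k\<le>n. \<Sum>z\<in>B. (\<integral>\<^sup>+w. Q x w * ?T k w z \<partial>count_space UNIV) * kernel_pow Q (n - k) z y)"
      by (simp add: distrib_left nn_integral_add nn_integral_sum sum_distrib_left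
          nn_integral_multc mult.assoc[symmetric] del: kernel_pow.simps(2))
    also have "\<dots> = ?T (Suc n) x y * indicator (-B) y
        + (\<Sum>k\<le>Suc n. \<Sum>z\<in>B. ?T k x z * kernel_pow Q (Suc n - k) z y)"
      unfolding head no_entry using False
      by (simp add: kernel_pow_taboo_Suc_out del: kernel_pow.simps)
    finally show ?thesis .
  qed
qed

lemma kernel_green_first_entrance:
  fixes Q :: "'s::countable \<Rightarrow> 's \<Rightarrow> ennreal"
  assumes "finite B"
  shows "kernel_green Q x y = kernel_green (taboo B Q) x y * indicator (-B) y
           + (\<Sum>z\<in>B. kernel_green (taboo B Q) x z * kernel_green Q z y)"
proof -
  let ?T = "kernel_pow (taboo B Q)"
  have "kernel_green Q x y = (\<Sum>n. ?T n x y * indicator (-B) y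
           + (\<Sum>z\<in>B. \<Sum>k\<le>n. ?T k x z * kernel_pow Q (n - k) z y))"
    unfolding kernel_green_def
    by (subst kernel_pow_first_entrance[OF assms]) (simp add: sum.swap[of _ B])
  also have "\<dots> = (\<Sum>n. ?T n x y) * indicator (-B) y
           + (\<Sum>z\<in>B. \<Sum>n. \<Sum>k\<le>n. ?T k x z * kernel_pow Q (n - k) z y)"
    by (simp add: suminf_add[symmetric] suminf_sum[symmetric] ennreal_suminf_multc
        del: kernel_pow.simps(2))
  also have "\<dots> = kernel_green (taboo B Q) x y * indicator (-B) y
           + (\<Sum>z\<in>B. kernel_green (taboo B Q) x z * kernel_green Q z y)"
    unfolding kernel_green_def
    by (simp add: ennreal_suminf_diagonal[where f="\<lambda>k j. ?T k _ _ * kernel_pow Q j _ _"]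
        ennreal_suminf_cmult del: kernel_pow.simps(2))
  finally show ?thesis .
qed

section \<open>Markov chains driven by independent transition samples\<close>

lemma sets_Collect_of_measurable:
  assumes "g \<in> measurable M (count_space UNIV)"
  shows "{w\<in>space M. P (g w)} \<in> sets M"
  using measurable_sets[OF assms, of "Collect P"] by (simp add: vimage_def Int_def conj_commute)

text \<open>Writing Pi I as the image of M c \<Otimes> Pi (I - {c}) under (a, f) \<mapsto> f(c := a), an event A that
  ignores coordinate c becomes a product set whose second factor is the section of A at any a0.\<close>

lemma emeasure_PiM_Int_coordinate_section:
  fixes M :: "'i \<Rightarrow> 'b measure"
  assumes prob: "\<And>i. i \<in> I \<Longrightarrow> prob_space (M i)" and c: "c \<in> I"
    and A: "A \<in> sets (Pi\<^sub>M I M)" and Y: "Y \<in> sets (M c)" and a0: "a0 \<in> space (M c)"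
    and inv: "\<And>w a. w \<in> space (Pi\<^sub>M I M) \<Longrightarrow> a \<in> space (M c) \<Longrightarrow> w(c := a) \<in> A \<longleftrightarrow> w \<in> A"
  shows "emeasure (Pi\<^sub>M I M) (A \<inter> {w\<in>space (Pi\<^sub>M I M). w c \<in> Y})
       = emeasure (M c) Y
         * emeasure (Pi\<^sub>M (I - {c}) M) {f\<in>space (Pi\<^sub>M (I - {c}) M). f(c := a0) \<in> A}"
proof -
  define J where "J = I - {c}"
  define A' where "A' = {f\<in>space (Pi\<^sub>M J M). f(c := a0) \<in> A}"
  have IJ: "insert c J = I" using c by (auto simp: J_def)
  interpret PJ: prob_space "Pi\<^sub>M J M" using prob by (intro prob_space_PiM) (auto simp: J_def)
  define g where "g = (\<lambda>(a::'b, f::'i \<Rightarrow> 'b). f(c := a))"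
  have g: "g \<in> measurable (M c \<Otimes>\<^sub>M Pi\<^sub>M J M) (Pi\<^sub>M I M)"
    unfolding g_def IJ[symmetric] by measurable
  have distr_g: "distr (M c \<Otimes>\<^sub>M Pi\<^sub>M J M) (Pi\<^sub>M I M) g = Pi\<^sub>M I M"
    using distr_pair_PiM_eq_PiM[of J M c] prob c unfolding IJ g_def by (auto simp: J_def)
  have g_space: "f(c := a) \<in> space (Pi\<^sub>M I M)" if "a \<in> space (M c)" "f \<in> space (Pi\<^sub>M J M)" for a f
    using measurable_space[OF g, of "(a, f)"] that by (simp add: g_def space_pair_measure)
  have A': "A' \<in> sets (Pi\<^sub>M J M)"
  proof -
    have "(\<lambda>f. g (a0, f)) \<in> measurable (Pi\<^sub>M J M) (Pi\<^sub>M I M)"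
      using g a0 by measurable
    from measurable_sets[OF this A] show ?thesis
      by (simp add: A'_def g_def vimage_def Int_def conj_commute)
  qed
  have "f(c := a) \<in> A \<longleftrightarrow> f \<in> A'" if "a \<in> space (M c)" "f \<in> space (Pi\<^sub>M J M)" for a f
    using inv[OF g_space[OF a0 that(2)] that(1)] that by (simp add: A'_def)
  then have "g -` (A \<inter> {w\<in>space (Pi\<^sub>M I M). w c \<in> Y}) \<inter> space (M c \<Otimes>\<^sub>M Pi\<^sub>M J M) = Y \<times> A'"
    using g_space sets.sets_into_space[OF Y] A'
    by (auto simp: g_def space_pair_measure A'_def)
  moreover have "A \<inter> {w\<in>space (Pi\<^sub>M I M). w c \<in> Y} \<in> sets (Pi\<^sub>M I M)"
    using A c Y by measurable
  ultimately have "emeasure (Pi\<^sub>M I M) (A \<inter> {w\<in>space (Pi\<^sub>M I M). w c \<in> Y})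
      = emeasure (M c \<Otimes>\<^sub>M Pi\<^sub>M J M) (Y \<times> A')"
    using g by (subst distr_g[symmetric]) (simp add: emeasure_distr)
  also have "\<dots> = emeasure (M c) Y * emeasure (Pi\<^sub>M J M) A'"
    using Y A' by (rule PJ.emeasure_pair_measure_Times)
  finally show ?thesis by (simp add: A'_def J_def)
qed

lemma emeasure_PiM_Int_coordinate:
  fixes M :: "'i \<Rightarrow> 'b measure"
  assumes prob: "\<And>i. i \<in> I \<Longrightarrow> prob_space (M i)" and c: "c \<in> I"
    and A: "A \<in> sets (Pi\<^sub>M I M)" and X: "X \<in> sets (M c)"
    and inv: "\<And>w a. w \<in> space (Pi\<^sub>M I M) \<Longrightarrow> a \<in> space (M c) \<Longrightarrow> w(c := a) \<in> A \<longleftrightarrow> w \<in> A"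
  shows "emeasure (Pi\<^sub>M I M) (A \<inter> {w\<in>space (Pi\<^sub>M I M). w c \<in> X})
       = emeasure (Pi\<^sub>M I M) A * emeasure (M c) X"
proof -
  interpret Mc: prob_space "M c" using prob c by auto
  obtain a0 where a0: "a0 \<in> space (M c)" using Mc.not_empty by auto
  let ?A' = "{f\<in>space (Pi\<^sub>M (I - {c}) M). f(c := a0) \<in> A}"
  have split_off: "emeasure (Pi\<^sub>M I M) (A \<inter> {w\<in>space (Pi\<^sub>M I M). w c \<in> Y})
      = emeasure (M c) Y * emeasure (Pi\<^sub>M (I - {c}) M) ?A'" if "Y \<in> sets (M c)" for Y
    using prob c A that a0 inv by (rule emeasure_PiM_Int_coordinate_section)
  have "A \<inter> {w\<in>space (Pi\<^sub>M I M). w c \<in> space (M c)} = A"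
    using sets.sets_into_space[OF A] c by (auto simp: space_PiM)
  then have "emeasure (Pi\<^sub>M I M) A = emeasure (Pi\<^sub>M (I - {c}) M) ?A'"
    using split_off[of "space (M c)"] Mc.emeasure_space_1 by simp
  then show ?thesis
    using split_off[OF X] by (simp add: mult.commute)
qed

definition chain_space :: "('s \<Rightarrow> 's pmf) \<Rightarrow> ((nat \<times> 's) \<Rightarrow> 's) measure" where
  "chain_space K = (\<Pi>\<^sub>M i\<in>UNIV. measure_pmf (K (snd i)))"

fun iter_chain :: "'s \<Rightarrow> ((nat \<times> 's) \<Rightarrow> 's) \<Rightarrow> nat \<Rightarrow> 's" where
  "iter_chain s0 w 0 = s0"
| "iter_chain s0 w (Suc n) = w (n, iter_chain s0 w n)"

definition pmf_kernel :: "('s \<Rightarrow> 's pmf) \<Rightarrow> 's \<Rightarrow> 's \<Rightarrow> ennreal" where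
  "pmf_kernel K s t = ennreal (pmf (K s) t)"

lemma prob_space_chain_space: "prob_space (chain_space K)"
  unfolding chain_space_def by (intro prob_space_PiM measure_pmf.prob_space_axioms)

lemma space_chain_space: "space (chain_space K) = UNIV"
  by (simp add: chain_space_def space_PiM)

lemma measurable_chain_space_coordinate:
  "(\<lambda>w. f (w i)) \<in> measurable (chain_space K) (count_space UNIV)"
  unfolding chain_space_def
  by (rule measurable_compose[OF measurable_component_singleton[of i UNIV]]) auto

lemma emeasure_chain_space_Int_coordinate:
  assumes "A \<in> sets (chain_space K)" "\<And>w a. w(c := a) \<in> A \<longleftrightarrow> w \<in> A"
  shows "emeasure (chain_space K) (A \<inter> {w\<in>space (chain_space K). w c \<in> X})
       = emeasure (chain_space K) A * emeasure (measure_pmf (K (snd c))) X"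
  using assms unfolding chain_space_def
  by (intro emeasure_PiM_Int_coordinate measure_pmf.prob_space_axioms) auto

lemma iter_chain_fun_upd: "n \<le> m \<Longrightarrow> iter_chain s0 (w((m, s) := a)) n = iter_chain s0 w n"
  by (induction n) auto

lemma measurable_iter_chain[measurable]:
  fixes K :: "'s::countable \<Rightarrow> 's pmf"
  shows "(\<lambda>w. iter_chain s0 w n) \<in> measurable (chain_space K) (count_space UNIV)"
proof (induction n)
  case (Suc n)
  then show ?case
    by (simp only: iter_chain.simps)
      (rule measurable_compose_countable'[OF measurable_chain_space_coordinate Suc], auto)
qed simp

lemma emeasure_iter_chain_eq:
  fixes K :: "'s::countable \<Rightarrow> 's pmf"
  shows "emeasure (chain_space K) {w\<in>space (chain_space K). iter_chain s0 w n = t}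
       = kernel_pow (pmf_kernel K) n s0 t"
proof (induction n arbitrary: t)
  case 0
  show ?case
    using prob_space.emeasure_space_1[OF prob_space_chain_space[of K]]
    by (simp add: Collect_conv_if)
next
  case (Suc n)
  let ?P = "chain_space K"
  let ?at = "\<lambda>s. {w\<in>space ?P. iter_chain s0 w n = s}"
  have step: "emeasure ?P (?at s \<inter> {w\<in>space ?P. w (n, s) \<in> {t}})
      = kernel_pow (pmf_kernel K) n s0 s * pmf_kernel K s t" for s
  proof -
    have "?at s \<in> sets ?P" by measurable
    moreover have "w((n, s) := a) \<in> ?at s \<longleftrightarrow> w \<in> ?at s" for w a
      by (simp add: space_chain_space iter_chain_fun_upd)
    ultimately show ?thesis
      using emeasure_chain_space_Int_coordinate[of "?at s" K "(n, s)" "{t}"]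
      by (simp add: Suc pmf_kernel_def[of K s t] emeasure_pmf_single)
  qed
  have "{w\<in>space ?P. iter_chain s0 w (Suc n) = t}
      = (\<Union>s. ?at s \<inter> {w\<in>space ?P. w (n, s) \<in> {t}})"
    by auto
  also have "emeasure ?P \<dots>
      = (\<integral>\<^sup>+s. emeasure ?P (?at s \<inter> {w\<in>space ?P. w (n, s) \<in> {t}}) \<partial>count_space UNIV)"
    by (intro emeasure_UN_countable sets.Int)
      (auto simp: disjoint_family_on_def intro: sets_Collect_of_measurable
        measurable_chain_space_coordinate[where f="\<lambda>a. a"])
  also have "\<dots> = (\<integral>\<^sup>+s. kernel_pow (pmf_kernel K) n s0 s * pmf_kernel K s t \<partial>count_space UNIV)"
    by (simp only: step)
  finally show ?case
    by simp
qed

lemma nn_integral_iter_chain_visits: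
  fixes K :: "'s::countable \<Rightarrow> 's pmf"
  shows "(\<integral>\<^sup>+w. (\<Sum>n. indicator {t} (iter_chain s0 w n)) \<partial>chain_space K)
       = kernel_green (pmf_kernel K) s0 t"
proof -
  let ?P = "chain_space K"
  have visit: "(\<integral>\<^sup>+w. indicator {t} (iter_chain s0 w n) \<partial>?P) = kernel_pow (pmf_kernel K) n s0 t"
    for n
  proof -
    have "(\<integral>\<^sup>+w. indicator {t} (iter_chain s0 w n) \<partial>?P)
        = (\<integral>\<^sup>+w. indicator {w\<in>space ?P. iter_chain s0 w n = t} w \<partial>?P)"
      by (intro nn_integral_cong) (auto split: split_indicator)
    also have "\<dots> = kernel_pow (pmf_kernel K) n s0 t"
      by (subst nn_integral_indicator) (simp_all add: emeasure_iter_chain_eq)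
    finally show ?thesis .
  qed
  have "(\<integral>\<^sup>+w. (\<Sum>n. indicator {t} (iter_chain s0 w n)) \<partial>?P)
      = (\<Sum>n. \<integral>\<^sup>+w. indicator {t} (iter_chain s0 w n) \<partial>?P)"
    by (rule nn_integral_suminf) (rule measurable_compose[OF measurable_iter_chain], simp)
  then show ?thesis
    by (simp add: visit kernel_green_def)
qed

section \<open>First entrances of the branching chain into B\<close>

lemma nn_integral_lists_by_length:
  fixes f :: "'b list \<Rightarrow> ennreal"
  shows "(\<integral>\<^sup>+u. f u \<partial>count_space UNIV) = (\<Sum>n. \<integral>\<^sup>+u. f u \<partial>count_space {u. length u = n})"
proof -
  have "(\<Sum>n. indicator {u. length u = n} u * f u) = f u" for u
    using suminf_finite[of "{length u}" "\<lambda>n. indicator {u. length u = n} u * f u"] by simp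
  then show ?thesis
    by (simp add: nn_integral_count_space_indicator nn_integral_suminf[symmetric] mult.commute)
qed

lemma nn_integral_lists_length_Suc:
  fixes f :: "'b::countable list \<Rightarrow> ennreal"
  shows "(\<integral>\<^sup>+u. f u \<partial>count_space {u. length u = Suc n})
       = (\<integral>\<^sup>+v. \<integral>\<^sup>+i. f (i # v) \<partial>count_space UNIV \<partial>count_space {v. length v = n})"
proof -
  have "bij_betw (\<lambda>iv. fst iv # snd iv) (UNIV \<times> {v. length v = n}) {u. length u = Suc n}"
    by (rule bij_betwI[where g="\<lambda>u. (hd u, tl u)"]) (auto simp: length_Suc_conv)
  then have "(\<integral>\<^sup>+u. f u \<partial>count_space {u. length u = Suc n})
      = (\<integral>\<^sup>+iv. f (fst iv # snd iv) \<partial>count_space (UNIV \<times> {v. length v = n}))"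
    by (rule nn_integral_bij_count_space[symmetric])
  also have "\<dots> = (\<integral>\<^sup>+i. \<integral>\<^sup>+v. f (i # v) \<partial>count_space {v. length v = n} \<partial>count_space UNIV)"
    by (simp add: nn_integral_count_space_indicator nn_integral_fst_count_space[symmetric]
        indicator_times split_beta')
  also have "\<dots> = (\<integral>\<^sup>+v. \<integral>\<^sup>+i. f (i # v) \<partial>count_space UNIV \<partial>count_space {v. length v = n})"
    by (rule nn_integral_count_space_nn_integral) auto
  finally show ?thesis .
qed

lemma ball_drop_Cons:
  "(\<forall>k\<in>{1..length (i # v)}. Q (drop k (i # v))) \<longleftrightarrow> Q v \<and> (\<forall>k\<in>{1..length v}. Q (drop k v))"
proof -
  have "{1..length (i # v)} = insert 1 (Suc ` {1..length v})"
    by (simp add: Icc_eq_insert_lb_nat image_Suc_atLeastAtMost)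
  then show ?thesis by (simp del: image_Suc_atLeastAtMost)
qed

lemma mean_offspring_eq_tail_sum:
  "mean_offspring d z = (\<integral>\<^sup>+i. emeasure (measure_pmf (d z)) {i<..} \<partial>count_space UNIV)"
proof -
  have "(\<integral>\<^sup>+i. emeasure (measure_pmf (d z)) {i<..} \<partial>count_space UNIV)
      = (\<integral>\<^sup>+i. \<integral>\<^sup>+n. indicator {..<n} i \<partial>measure_pmf (d z) \<partial>count_space UNIV)"
    by (intro nn_integral_cong) (auto intro!: nn_integral_indicator[symmetric, THEN trans]
        nn_integral_cong split: split_indicator)
  also have "\<dots> = (\<integral>\<^sup>+n. \<integral>\<^sup>+i. indicator {..<n} i \<partial>count_space UNIV \<partial>measure_pmf (d z))"
    by (rule nn_integral_count_space_nn_integral[symmetric]) auto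
  also have "\<dots> = mean_offspring d z"
    by (simp add: mean_offspring_def ennreal_of_nat_eq_real_of_nat)
  finally show ?thesis ..
qed

lemma space_bmc_space: "space (bmc_space d p) = UNIV"
  by (simp add: bmc_space_def space_PiM)

lemma prob_space_bmc_space: "prob_space (bmc_space d p)"
  unfolding bmc_space_def by (intro prob_space_PiM measure_pmf.prob_space_axioms)

lemma measurable_bmc_coordinate:
  "(\<lambda>w. f (w i)) \<in> measurable (bmc_space d p) (count_space UNIV)"
  unfolding bmc_space_def
  by (rule measurable_compose[OF measurable_component_singleton[of i UNIV]]) auto

lemma emeasure_bmc_Int_coordinate:
  assumes "A \<in> sets (bmc_space d p)" "\<And>w a. w((u, z, b) := a) \<in> A \<longleftrightarrow> w \<in> A"
  shows "emeasure (bmc_space d p) (A \<inter> {w\<in>space (bmc_space d p). w (u, z, b) \<in> X})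
       = emeasure (bmc_space d p) A * emeasure (measure_pmf (pair_pmf (d z) (p z))) X"
  using assms unfolding bmc_space_def
  by (subst emeasure_PiM_Int_coordinate) (auto intro: measure_pmf.prob_space_axioms)

lemma measurable_bmc_pos[measurable]:
  fixes d :: "'a::countable \<Rightarrow> nat pmf"
  shows "(\<lambda>w. bmc_pos x w u) \<in> measurable (bmc_space d p) (count_space UNIV)"
proof (induction u)
  case (Cons i u)
  then show ?case
    by (simp only: bmc_pos.simps)
      (rule measurable_compose_countable'[OF measurable_bmc_coordinate Cons], auto)
qed simp

lemma measurable_bmc_nchildren[measurable]:
  fixes d :: "'a::countable \<Rightarrow> nat pmf"
  shows "(\<lambda>w. bmc_nchildren x w u) \<in> measurable (bmc_space d p) (count_space UNIV)"
  unfolding bmc_nchildren_def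
  by (rule measurable_compose_countable'[OF measurable_bmc_coordinate measurable_bmc_pos]) auto

lemma measurable_bmc_alive[measurable]:
  fixes d :: "'a::countable \<Rightarrow> nat pmf"
  shows "(\<lambda>w. bmc_alive x w u) \<in> measurable (bmc_space d p) (count_space UNIV)"
proof (induction u)
  case (Cons i u)
  have "(\<lambda>w. b \<and> i < bmc_nchildren x w u) \<in> measurable (bmc_space d p) (count_space UNIV)" for b
    by (rule measurable_compose[OF measurable_bmc_nchildren]) auto
  then show ?case
    by (simp only: bmc_alive.simps) (rule measurable_compose_countable'[OF _ Cons], auto)
qed simp

lemma bmc_pos_fun_upd_nchildren: "bmc_pos x (w((v, s, True) := a)) u = bmc_pos x w u"
  by (induction u) auto

lemma bmc_pos_fun_upd_longer:
  "length u < length v \<Longrightarrow> bmc_pos x (w((v, s, b) := a)) u = bmc_pos x w u"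
  by (induction u) auto

lemma bmc_alive_fun_upd_nchildren:
  "length u \<le> length v \<Longrightarrow> bmc_alive x (w((v, s, True) := a)) u = bmc_alive x w u"
  by (induction u) (auto simp: bmc_nchildren_def bmc_pos_fun_upd_nchildren)

lemma bmc_alive_fun_upd_longer:
  "length u < length v \<Longrightarrow> bmc_alive x (w((v, s, b) := a)) u = bmc_alive x w u"
  by (induction u) (auto simp: bmc_nchildren_def bmc_pos_fun_upd_longer)

definition bmc_taboo_event :: "'a set \<Rightarrow> 'a \<Rightarrow> nat list \<Rightarrow> 'a
    \<Rightarrow> ((nat list \<times> 'a \<times> bool) \<Rightarrow> nat \<times> 'a) set" where
  "bmc_taboo_event B x u z = {w. bmc_alive x w u \<and> bmc_pos x w u = z
       \<and> (\<forall>k\<in>{1..length u}. bmc_pos x w (drop k u) \<notin> B)}"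

lemma sets_bmc_taboo_event[measurable]:
  fixes d :: "'a::countable \<Rightarrow> nat pmf"
  shows "bmc_taboo_event B x u z \<in> sets (bmc_space d p)"
proof -
  have "{w\<in>space (bmc_space d p). bmc_alive x w u \<and> bmc_pos x w u = z
       \<and> (\<forall>k\<in>{1..length u}. bmc_pos x w (drop k u) \<notin> B)} \<in> sets (bmc_space d p)"
    by measurable
  then show ?thesis by (simp add: bmc_taboo_event_def space_bmc_space)
qed

lemma bmc_taboo_event_fun_upd_longer:
  "length v < length v'
    \<Longrightarrow> w((v', s, b) := a) \<in> bmc_taboo_event B x v z \<longleftrightarrow> w \<in> bmc_taboo_event B x v z"
proof -
  assume "length v < length v'"
  then have "length (drop k v) < length v'" for k by simp
  with \<open>length v < length v'\<close> show ?thesis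
    by (simp add: bmc_taboo_event_def bmc_pos_fun_upd_longer bmc_alive_fun_upd_longer)
qed

lemma bmc_taboo_event_fun_upd_nchildren:
  "w((v, s, True) := a) \<in> bmc_taboo_event B x v z \<longleftrightarrow> w \<in> bmc_taboo_event B x v z"
  by (simp add: bmc_taboo_event_def bmc_pos_fun_upd_nchildren bmc_alive_fun_upd_nchildren)

lemma bmc_taboo_event_Nil: "bmc_taboo_event B x [] z = (if x = z then UNIV else {})"
  by (auto simp: bmc_taboo_event_def)

lemma bmc_taboo_event_Cons:
  "bmc_taboo_event B x (i # v) y
     = (\<Union>z\<in>-B. (bmc_taboo_event B x v z
                   \<inter> {w\<in>space (bmc_space d p). w (v, z, True) \<in> {a. i < fst a}})
                 \<inter> {w\<in>space (bmc_space d p). w (i # v, z, False) \<in> {a. snd a = y}})"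
proof -
  have "(\<forall>k\<in>{1..length (i # v)}. bmc_pos x w (drop k (i # v)) \<notin> B)
      \<longleftrightarrow> bmc_pos x w v \<notin> B \<and> (\<forall>k\<in>{1..length v}. bmc_pos x w (drop k v) \<notin> B)" for w
    by (rule ball_drop_Cons)
  then show ?thesis
    unfolding bmc_taboo_event_def by (auto simp: bmc_nchildren_def space_bmc_space)
qed

text \<open>On the event for v at z, the number of children of v and the position of its child i are
  read off the coordinates (v, z, True) and (i # v, z, False), which that event does not inspect.\<close>

lemma emeasure_bmc_taboo_event_child:
  fixes d :: "'a::countable \<Rightarrow> nat pmf"
  shows "emeasure (bmc_space d p) ((bmc_taboo_event B x v z
            \<inter> {w\<in>space (bmc_space d p). w (v, z, True) \<in> {a. i < fst a}})
          \<inter> {w\<in>space (bmc_space d p). w (i # v, z, False) \<in> {a. snd a = y}})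
     = emeasure (bmc_space d p) (bmc_taboo_event B x v z) * emeasure (measure_pmf (d z)) {i<..}
       * pmf (p z) y"
proof -
  let ?P = "bmc_space d p"
  let ?E = "bmc_taboo_event B x v z"
  let ?more = "{w\<in>space ?P. w (v, z, True) \<in> {a. i < fst a}}"
  have "?more \<in> sets ?P"
    by (auto intro: sets_Collect_of_measurable measurable_bmc_coordinate[where f="\<lambda>a. a"])
  then have "emeasure ?P ((?E \<inter> ?more) \<inter> {w\<in>space ?P. w (i # v, z, False) \<in> {a. snd a = y}})
      = emeasure ?P (?E \<inter> ?more) * emeasure (measure_pmf (pair_pmf (d z) (p z))) {a. snd a = y}"
    by (intro emeasure_bmc_Int_coordinate sets.Int sets_bmc_taboo_event)
      (simp_all add: space_bmc_space bmc_taboo_event_fun_upd_longer)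
  also have "emeasure ?P (?E \<inter> ?more)
      = emeasure ?P ?E * emeasure (measure_pmf (pair_pmf (d z) (p z))) {a. i < fst a}"
    by (intro emeasure_bmc_Int_coordinate sets_bmc_taboo_event bmc_taboo_event_fun_upd_nchildren)
  also have "emeasure (measure_pmf (pair_pmf (d z) (p z))) {a. i < fst a}
      = emeasure (measure_pmf (d z)) {i<..}"
    using emeasure_map_pmf[of fst "pair_pmf (d z) (p z)" "{i<..}"]
    by (simp add: map_fst_pair_pmf vimage_def)
  also have "emeasure (measure_pmf (pair_pmf (d z) (p z))) {a. snd a = y} = pmf (p z) y"
    using emeasure_map_pmf[of snd "pair_pmf (d z) (p z)" "{y}"]
    by (simp add: map_snd_pair_pmf vimage_def emeasure_pmf_single)
  finally show ?thesis .
qed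

lemma emeasure_bmc_taboo_event_Cons:
  fixes d :: "'a::countable \<Rightarrow> nat pmf"
  shows "emeasure (bmc_space d p) (bmc_taboo_event B x (i # v) y)
     = (\<integral>\<^sup>+z. indicator (-B) z * emeasure (bmc_space d p) (bmc_taboo_event B x v z)
           * emeasure (measure_pmf (d z)) {i<..} * pmf (p z) y \<partial>count_space UNIV)"
proof -
  let ?P = "bmc_space d p"
  let ?E = "bmc_taboo_event B x"
  let ?child = "\<lambda>z. (?E v z \<inter> {w\<in>space ?P. w (v, z, True) \<in> {a. i < fst a}})
    \<inter> {w\<in>space ?P. w (i # v, z, False) \<in> {a. snd a = y}}"
  have "?child z \<in> sets ?P" for z
    by (intro sets.Int sets_bmc_taboo_event)
      (auto intro: sets_Collect_of_measurable measurable_bmc_coordinate[where f="\<lambda>a. a"])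
  then have "emeasure ?P (?E (i # v) y) = (\<integral>\<^sup>+z. emeasure ?P (?child z) \<partial>count_space (-B))"
    unfolding bmc_taboo_event_Cons[where d=d and p=p]
    by (intro emeasure_UN_countable) (auto simp: disjoint_family_on_def bmc_taboo_event_def)
  also have "\<dots> = (\<integral>\<^sup>+z. emeasure ?P (?E v z) * emeasure (measure_pmf (d z)) {i<..} * pmf (p z) y
      \<partial>count_space (-B))"
    by (simp only: emeasure_bmc_taboo_event_child)
  finally show ?thesis
    by (simp add: nn_integral_count_space_indicator ac_simps)
qed

lemma nn_integral_bmc_taboo_event_children:
  fixes d :: "'a::countable \<Rightarrow> nat pmf"
  shows "(\<integral>\<^sup>+i. emeasure (bmc_space d p) (bmc_taboo_event B x (i # v) y) \<partial>count_space UNIV)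
       = (\<integral>\<^sup>+z. emeasure (bmc_space d p) (bmc_taboo_event B x v z) * taboo B (qmat d p) z y
            \<partial>count_space UNIV)"
proof -
  let ?c = "\<lambda>z. indicator (-B) z * emeasure (bmc_space d p) (bmc_taboo_event B x v z) * pmf (p z) y"
  have "(\<integral>\<^sup>+i. emeasure (bmc_space d p) (bmc_taboo_event B x (i # v) y) \<partial>count_space UNIV)
      = (\<integral>\<^sup>+z. \<integral>\<^sup>+i. ?c z * emeasure (measure_pmf (d z)) {i<..}
          \<partial>count_space UNIV \<partial>count_space UNIV)"
    unfolding emeasure_bmc_taboo_event_Cons
    by (subst nn_integral_count_space_nn_integral) (auto intro!: nn_integral_cong simp: ac_simps)
  also have "\<dots> = (\<integral>\<^sup>+z. ?c z * mean_offspring d z \<partial>count_space UNIV)"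
    by (simp add: nn_integral_cmult mean_offspring_eq_tail_sum)
  also have "\<dots> = (\<integral>\<^sup>+z. emeasure (bmc_space d p) (bmc_taboo_event B x v z) * taboo B (qmat d p) z y
            \<partial>count_space UNIV)"
    by (simp add: taboo_def qmat_def ac_simps)
  finally show ?thesis .
qed

lemma nn_integral_bmc_taboo_event_generation:
  fixes d :: "'a::countable \<Rightarrow> nat pmf"
  shows "(\<integral>\<^sup>+u. emeasure (bmc_space d p) (bmc_taboo_event B x u y) \<partial>count_space {u. length u = n})
       = kernel_pow (taboo B (qmat d p)) n x y"
proof (induction n arbitrary: y)
  case 0
  show ?case
    using prob_space.emeasure_space_1[OF prob_space_bmc_space, of d p]
    by (simp add: bmc_taboo_event_Nil space_bmc_space nn_integral_count_space_finite)
next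
  case (Suc n)
  let ?P = "bmc_space d p"
  have "(\<integral>\<^sup>+u. emeasure ?P (bmc_taboo_event B x u y) \<partial>count_space {u. length u = Suc n})
      = (\<integral>\<^sup>+v. \<integral>\<^sup>+z. emeasure ?P (bmc_taboo_event B x v z) * taboo B (qmat d p) z y
           \<partial>count_space UNIV \<partial>count_space {v. length v = n})"
    by (simp add: nn_integral_lists_length_Suc nn_integral_bmc_taboo_event_children)
  also have "\<dots> = (\<integral>\<^sup>+z. (\<integral>\<^sup>+v. emeasure ?P (bmc_taboo_event B x v z) \<partial>count_space {v. length v = n})
           * taboo B (qmat d p) z y \<partial>count_space UNIV)"
    by (subst nn_integral_count_space_nn_integral) (auto intro!: nn_integral_cong nn_integral_multc)
  also have "\<dots> = kernel_pow (taboo B (qmat d p)) (Suc n) x y"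
    by (simp add: Suc)
  finally show ?case .
qed

lemma hfunE_eq_sum_kernel_green_taboo:
  fixes d :: "'a::countable \<Rightarrow> nat pmf"
  assumes "finite B"
  shows "hfunE d p B x = (\<Sum>z\<in>B. kernel_green (taboo B (qmat d p)) x z)"
proof -
  let ?P = "bmc_space d p"
  let ?E = "bmc_taboo_event B x"
  have HB_eq: "HB B x w = {u. w \<in> (\<Union>z\<in>B. ?E u z)}" for w
    by (auto simp: HB_def bmc_taboo_event_def)
  have sets_E: "(\<Union>z\<in>B. ?E u z) \<in> sets ?P" for u
    using assms by (intro sets.finite_UN sets_bmc_taboo_event) auto
  have "hfunE d p B x = (\<integral>\<^sup>+w. \<integral>\<^sup>+u. indicator (\<Union>z\<in>B. ?E u z) w \<partial>count_space UNIV \<partial>?P)"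
    unfolding hfunE_def HB_eq
    by (intro nn_integral_cong) (simp add: nn_integral_indicator[symmetric] indicator_def)
  also have "\<dots> = (\<integral>\<^sup>+u. emeasure ?P (\<Union>z\<in>B. ?E u z) \<partial>count_space UNIV)"
    using sets_E by (subst nn_integral_count_space_nn_integral) auto
  also have "\<dots> = (\<integral>\<^sup>+u. (\<Sum>z\<in>B. emeasure ?P (?E u z)) \<partial>count_space UNIV)"
  proof (intro nn_integral_cong)
    fix u
    have "disjoint_family_on (?E u) B"
      by (auto simp: disjoint_family_on_def bmc_taboo_event_def)
    with assms show "emeasure ?P (\<Union>z\<in>B. ?E u z) = (\<Sum>z\<in>B. emeasure ?P (?E u z))"
      by (subst emeasure_UN_countable)
        (auto simp: countable_finite nn_integral_count_space_finite)
  qed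
  also have "\<dots> = (\<Sum>z\<in>B. kernel_green (taboo B (qmat d p)) x z)"
    by (simp add: nn_integral_sum nn_integral_lists_by_length[where f="\<lambda>u. emeasure ?P (?E u _)"]
        nn_integral_bmc_taboo_event_generation kernel_green_def)
  finally show ?thesis .
qed

section \<open>The h-transformed chain\<close>

lemma nn_integral_count_space_option:
  fixes g :: "'b option \<Rightarrow> ennreal"
  shows "(\<integral>\<^sup>+t. g t \<partial>count_space UNIV) = g None + (\<integral>\<^sup>+y. g (Some y) \<partial>count_space UNIV)"
proof -
  have "(\<integral>\<^sup>+t. g t \<partial>count_space UNIV)
      = (\<integral>\<^sup>+t. g t * indicator {None} t + g t * indicator (range Some) t \<partial>count_space UNIV)"
    by (rule nn_integral_cong) (auto split: split_indicator option.splits)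
  also have "\<dots> = g None + (\<integral>\<^sup>+t. g t \<partial>count_space (range Some))"
    by (subst nn_integral_add) (auto simp: nn_integral_count_space_indicator)
  also have "(\<integral>\<^sup>+t. g t \<partial>count_space (range Some)) = (\<integral>\<^sup>+y. g (Some y) \<partial>count_space UNIV)"
    by (rule nn_integral_bij_count_space[symmetric]) (auto simp: bij_betw_def)
  finally show ?thesis .
qed

lemma finite_norming_region: "norming_region d p B \<Longrightarrow> finite B"
  by (simp add: norming_region_def)

lemma hchain_eq_iter_chain: "hchain x w n = iter_chain (Some x) w n"
  by (induction n) auto

context
  fixes d :: "'a::countable \<Rightarrow> nat pmf" and p :: "'a \<Rightarrow> 'a pmf" and B :: "'a set"
  assumes green_finite: "\<forall>u v. green d p u v < \<infinity>"
    and norming: "norming_region d p B"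
begin

lemmas finite_B = finite_norming_region[OF norming]
lemmas hfunE_eq_sum = hfunE_eq_sum_kernel_green_taboo[OF finite_B]

lemma qmat_finite: "qmat d p z y < \<top>"
  using kernel_pow_le_kernel_green[of "qmat d p" 1 z y, unfolded kernel_pow_one] green_finite
  by (simp add: green_eq_kernel_green order_le_less_trans)

lemma kernel_green_taboo_finite: "kernel_green (taboo B (qmat d p)) x y < \<top>"
  using kernel_green_mono[of "taboo B (qmat d p)" "qmat d p" x y, OF taboo_le] green_finite
  by (simp add: green_eq_kernel_green order_le_less_trans)

lemma hfunE_finite: "hfunE d p B x < \<top>"
  using finite_B kernel_green_taboo_finite
  by (simp add: hfunE_eq_sum sum_Pinfty less_top)

lemma hfunE_in_norming_region: "x \<in> B \<Longrightarrow> hfunE d p B x = 1"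
  using finite_B
  by (simp add: hfunE_eq_sum kernel_green_taboo_in)

lemma hfunE_pos: "hfunE d p B x > 0"
proof -
  have "0 < (\<Sum>w\<in>B. green d p x w)"
    using norming by (simp add: norming_region_def)
  then obtain w where w: "w \<in> B" "green d p x w \<noteq> 0"
    by (metis less_irrefl sum.neutral)
  have "green d p x w = (\<Sum>z\<in>B. kernel_green (taboo B (qmat d p)) x z * green d p z w)"
    using kernel_green_first_entrance[OF finite_B, of "qmat d p" x w] w(1)
    by (simp add: green_eq_kernel_green)
  with w(2) obtain z where z: "z \<in> B" "kernel_green (taboo B (qmat d p)) x z \<noteq> 0"
    by (metis (no_types, lifting) mult_zero_left sum.neutral)
  have "kernel_green (taboo B (qmat d p)) x z \<le> hfunE d p B x"
    unfolding hfunE_eq_sum using z(1) finite_B by (intro member_le_sum) auto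
  with z(2) show ?thesis
    by (metis order_less_le_trans zero_less_iff_neq_zero)
qed

lemma hfunE_harmonic:
  assumes "z \<notin> B"
  shows "(\<integral>\<^sup>+y. qmat d p z y * hfunE d p B y \<partial>count_space UNIV) = hfunE d p B z"
  using assms
  by (simp add: hfunE_eq_sum sum_distrib_left nn_integral_sum kernel_green_taboo_harmonic)

lemma hfunE_eq_hfun: "hfunE d p B x = ennreal (hfun d p B x)"
  unfolding hfun_def using hfunE_finite by (simp add: ennreal_enn2real)

lemma hfun_pos: "hfun d p B x > 0"
  using hfunE_pos[of x] by (simp add: hfunE_eq_hfun)

lemma ph_weight_nonneg: "ph_weight d p B z y \<ge> 0"
  using hfun_pos[of z] hfun_pos[of y] by (simp add: ph_weight_def)

lemma hfunE_mult_ph_weight: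
  "hfunE d p B z * ph_weight d p B z y = taboo B (qmat d p) z y * hfunE d p B y"
proof (cases "z \<in> B")
  case False
  have "hfunE d p B z * ph_weight d p B z y = ennreal (hfun d p B z * ph_weight d p B z y)"
    using hfun_pos[of z] ph_weight_nonneg[of z y] by (simp add: hfunE_eq_hfun ennreal_mult)
  also have "hfun d p B z * ph_weight d p B z y = enn2real (qmat d p z y) * hfun d p B y"
    using False hfun_pos[of z] by (simp add: ph_weight_def)
  also have "ennreal \<dots> = taboo B (qmat d p) z y * hfunE d p B y"
    using False hfun_pos[of y] qmat_finite[of z y]
    by (simp add: ennreal_mult hfunE_eq_hfun taboo_def ennreal_enn2real)
  finally show ?thesis .
qed (simp add: ph_weight_def taboo_def)

lemma nn_integral_ph_weight:
  "(\<integral>\<^sup>+y. ph_weight d p B z y \<partial>count_space UNIV) = indicator (-B) z"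
proof (cases "z \<in> B")
  case False
  have "hfunE d p B z * (\<integral>\<^sup>+y. ph_weight d p B z y \<partial>count_space UNIV) = hfunE d p B z"
    using False
    by (simp add: nn_integral_cmult[symmetric] hfunE_mult_ph_weight taboo_def hfunE_harmonic)
  then show ?thesis
    using False hfunE_pos[of z] hfunE_finite[of z]
    by (metis ennreal_mult_cancel_left indicator_simps(1) ComplI mult.right_neutral
        not_less_zero top.not_eq_extremum)
qed (simp add: ph_weight_def)

text \<open>embed_pmf only returns the intended weights because they are nonnegative and of total mass
  at most one, which is where the harmonicity of h off B enters.\<close>

lemma pmf_ph_kernel_Some: "pmf (ph_kernel d p B (Some z)) (Some y) = ph_weight d p B z y"
  and pmf_ph_kernel_None: "pmf (ph_kernel d p B None) (Some y) = 0"
proof -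
  have "pmf (ph_kernel d p B s) t = (case s of
       None \<Rightarrow> (if t = None then 1 else 0)
     | Some z \<Rightarrow> (case t of
           Some y \<Rightarrow> ph_weight d p B z y
         | None \<Rightarrow> 1 - enn2real (\<integral>\<^sup>+ y. ennreal (ph_weight d p B z y) \<partial>count_space UNIV)))" for s t
    unfolding ph_kernel_def
    using ph_weight_nonneg nn_integral_ph_weight
    by (subst pmf_embed_pmf)
      (auto simp: nn_integral_count_space_option split: option.splits split_indicator)
  then show "pmf (ph_kernel d p B (Some z)) (Some y) = ph_weight d p B z y"
    and "pmf (ph_kernel d p B None) (Some y) = 0"
    by simp_all
qed

lemma kernel_pow_ph_kernel:
  "kernel_pow (pmf_kernel (ph_kernel d p B)) n (Some x) (Some y) * hfunE d p B x
     = kernel_pow (taboo B (qmat d p)) n x y * hfunE d p B y"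
proof (induction n arbitrary: y)
  case (Suc n)
  let ?K = "pmf_kernel (ph_kernel d p B)"
  have step: "kernel_pow ?K (Suc n) (Some x) (Some y)
      = (\<integral>\<^sup>+z. kernel_pow ?K n (Some x) (Some z) * ph_weight d p B z y \<partial>count_space UNIV)"
    by (simp add: nn_integral_count_space_option pmf_kernel_def pmf_ph_kernel_Some
        pmf_ph_kernel_None del: kernel_pow.simps(1))
  have "kernel_pow ?K (Suc n) (Some x) (Some y) * hfunE d p B x
      = (\<integral>\<^sup>+z. (kernel_pow ?K n (Some x) (Some z) * hfunE d p B x) * ph_weight d p B z y
          \<partial>count_space UNIV)"
    unfolding step by (subst nn_integral_multc[symmetric]) (simp_all add: ac_simps)
  also have "\<dots> = (\<integral>\<^sup>+z. kernel_pow (taboo B (qmat d p)) n x z * taboo B (qmat d p) z y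
          * hfunE d p B y \<partial>count_space UNIV)"
    by (simp only: Suc mult.assoc hfunE_mult_ph_weight)
  also have "\<dots> = kernel_pow (taboo B (qmat d p)) (Suc n) x y * hfunE d p B y"
    by (simp add: nn_integral_multc)
  finally show ?case .
qed simp

lemma hvisits_mult_hfunE:
  "hvisits d p B x y * hfunE d p B x = kernel_green (taboo B (qmat d p)) x y * hfunE d p B y"
proof -
  have visits: "hvisits d p B x y = kernel_green (pmf_kernel (ph_kernel d p B)) (Some x) (Some y)"
    unfolding hvisits_def hchain_space_def chain_space_def[symmetric]
    using nn_integral_iter_chain_visits[of "ph_kernel d p B" "Some y" "Some x"]
    by (simp add: hchain_eq_iter_chain)
  have "hvisits d p B x y * hfunE d p B x
      = (\<Sum>n. kernel_pow (pmf_kernel (ph_kernel d p B)) n (Some x) (Some y) * hfunE d p B x)"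
    unfolding visits kernel_green_def by (rule ennreal_suminf_multc[symmetric])
  also have "\<dots> = (\<Sum>n. kernel_pow (taboo B (qmat d p)) n x y * hfunE d p B y)"
    by (simp only: kernel_pow_ph_kernel)
  also have "\<dots> = kernel_green (taboo B (qmat d p)) x y * hfunE d p B y"
    unfolding kernel_green_def by (rule ennreal_suminf_multc)
  finally show ?thesis .
qed

lemma mu_meas_eq:
  "mu_meas d p B x y = enn2real (kernel_green (taboo B (qmat d p)) x y) * hfun d p B y"
proof -
  have "mu_meas d p B x y = enn2real (hvisits d p B x y * hfunE d p B x)"
    by (simp add: mu_meas_def hfun_def enn2real_mult mult.commute)
  also have "\<dots> = enn2real (kernel_green (taboo B (qmat d p)) x y) * hfun d p B y"
    by (simp add: hvisits_mult_hfunE enn2real_mult hfun_def)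
  finally show ?thesis .
qed

lemma enn2real_green_first_entrance:
  "enn2real (green d p x y)
     = enn2real (kernel_green (taboo B (qmat d p)) x y) * indicator (-B) y
       + (\<Sum>z\<in>B. enn2real (kernel_green (taboo B (qmat d p)) x z) * enn2real (green d p z y))"
proof -
  let ?G = "kernel_green (taboo B (qmat d p))"
  have terms_finite: "?G x z * green d p z y < \<top>" for z
    using kernel_green_taboo_finite green_finite by (simp add: ennreal_mult_less_top)
  have "enn2real (green d p x y)
      = enn2real (?G x y * indicator (-B) y + (\<Sum>z\<in>B. ?G x z * green d p z y))"
    unfolding green_eq_kernel_green
      kernel_green_first_entrance[OF finite_B, of "qmat d p" x y] ..
  also have "\<dots> = enn2real (?G x y * indicator (-B) y) + enn2real (\<Sum>z\<in>B. ?G x z * green d p z y)"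
  proof (rule enn2real_plus)
    show "(\<Sum>z\<in>B. ?G x z * green d p z y) < \<top>"
      using terms_finite finite_B by (simp add: sum_Pinfty less_top)
    show "?G x y * indicator (-B) y < \<top>"
      using kernel_green_taboo_finite by (simp add: ennreal_mult_less_top split: split_indicator)
  qed
  also have "enn2real (\<Sum>z\<in>B. ?G x z * green d p z y)
      = (\<Sum>z\<in>B. enn2real (?G x z) * enn2real (green d p z y))"
    using terms_finite by (simp add: enn2real_sum enn2real_mult)
  finally show ?thesis
    by (simp add: enn2real_mult split: split_indicator)
qed

end

theorem mainTheorem10:
  fixes d :: "'a::countable \<Rightarrow> nat pmf" and p :: "'a \<Rightarrow> 'a pmf"
    and B :: "'a set" and x :: 'a
  assumes green_finite: "\<forall>u v. green d p u v < \<infinity>"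
    and norming: "norming_region d p B"
  shows "\<forall>y. enn2real (green d p x y)
           = indicator (-B) y * (mu_meas d p B x y / hfun d p B y)
             + (\<Sum>z\<in>B. mu_meas d p B x z * enn2real (green d p z y))"
proof
  fix y
  let ?G = "kernel_green (taboo B (qmat d p))"
  have mu_in_B: "mu_meas d p B x z = enn2real (?G x z)" if "z \<in> B" for z
    using hfunE_in_norming_region[OF assms that] by (simp add: mu_meas_eq[OF assms] hfun_def)
  have mu_over_h: "mu_meas d p B x y / hfun d p B y = enn2real (?G x y)"
    using hfun_pos[OF assms, of y] by (simp add: mu_meas_eq[OF assms])
  show "enn2real (green d p x y)
           = indicator (-B) y * (mu_meas d p B x y / hfun d p B y)
             + (\<Sum>z\<in>B. mu_meas d p B x z * enn2real (green d p z y))"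
    unfolding enn2real_green_first_entrance[OF assms, of x y] mu_over_h
    by (simp add: mu_in_B mult.commute)
qed

end
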